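(* For every integer $L\geq 0$, \[ \sum_{j=-\infty}^{\infty} (-1)^j q^{j^2} \left(\frac{j+1}{3}\right) {2L+1 \brack L+j}_{q^2} = \frac{(q^3;q^6)_L}{(q;q^2)_{L+1}}\,\bigl(1-q^{2(1+2L)}\bigr). \]
   Context: For a variable $a$ and integer $n\ge 0$, $(a;q)_n=(1-a)(1-aq)\cdots(1-aq^{n-1})$ (with $(a;q)_0=1$). The $q$-binomial coefficient is ${A \brack B}_q=\frac{(q;q)_A}{(q;q)_B(q;q)_{A-B}}$ if $0\le B\le A$ are integers, and $0$ otherwise; ${A\brack B}_{q^2}$ is the same with $q$ replaced by $q^2$. $\left(\frac{j}{3}\right)$ is the Legendre symbol modulo 3: it equals $1$ if $j\equiv 1 \pmod 3$, $-1$ if $j\equiv -1\pmod 3$, and $0$ if $3\mid j$. *)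

theory Defs
  imports Main
begin

definition qpoch :: "'a::comm_ring_1 \<Rightarrow> 'a \<Rightarrow> nat \<Rightarrow> 'a" where
  "qpoch a q n = (\<Prod>i<n. (1 - a * q ^ i))"

definition qbinom :: "'a::field \<Rightarrow> int \<Rightarrow> int \<Rightarrow> 'a" where
  "qbinom q A B = (if 0 \<le> B \<and> B \<le> A
     then qpoch q q (nat A) / (qpoch q q (nat B) * qpoch q q (nat (A - B)))
     else 0)"

definition leg3 :: "int \<Rightarrow> int" where
  "leg3 j = (if j mod 3 = 1 then 1 else if j mod 3 = 2 then -1 else 0)"

end

(* With k = L + j, the j-th summand is (-1)^L q^(L^2) c_k leg3(k + 2L + 1), where by the
   q-binomial theorem in base q^2 the c_k are the coefficients of
   F(X) = prod_{i=0}^{2L} (1 - q^(2(i-L)+1) X).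
   Since X^e = leg3(1 - e) + leg3(e) X modulo X^2 + X + 1 and leg3(e + 1) = leg3(1 - e) - leg3(e),
   the sum can be read off the remainder of X^(2L) F(X) modulo X^2 + X + 1; in effect F is
   evaluated at a primitive cube root of unity w, without adjoining w to the field.
   The factors i = L + s and i = L - 1 - s have reciprocal roots and combine to
   (1 - x w)(1 - w / x) = -(1 + x + 1/x) w with x = q^(2s+1), while i = 2L leaves 1 - q^(2L+1) w.
   So the sum is prod_{s<L} (1 + x + x^2) times (1 + q^(2L+1)), which is the right-hand side
   because 1 - x^3 = (1 - x)(1 + x + x^2). *)

theory Submission
  imports Defs "HOL-Computational_Algebra.Polynomial" "HOL-Number_Theory.Cong"
begin

lemma qpoch_same_Suc: "qpoch p p (Suc n) = qpoch p p n * (1 - p ^ Suc n)"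
  by (simp add: qpoch_def)

lemma qpoch_0 [simp]: "qpoch a q 0 = 1"
  by (simp add: qpoch_def)

lemma qpoch_0_left [simp]: "qpoch 0 q n = 1"
  by (simp add: qpoch_def)

lemma qpoch_same_nonzero:
  fixes p :: "'a::field"
  assumes "\<And>i. 0 < i \<Longrightarrow> p ^ i \<noteq> 1"
  shows "qpoch p p n \<noteq> 0"
  using assms[of "Suc _"] by (simp add: qpoch_def)

(* Division-free, so unlike qbinom it also behaves well when some qpoch p p n vanishes. *)
fun qbin :: "'a::comm_ring_1 \<Rightarrow> nat \<Rightarrow> nat \<Rightarrow> 'a" where
  "qbin p n 0 = 1"
| "qbin p 0 (Suc k) = 0"
| "qbin p (Suc n) (Suc k) = qbin p n (Suc k) + p ^ (n - k) * qbin p n k"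

lemma qbin_eq_0: "n < k \<Longrightarrow> qbin p n k = 0"
proof (induction n arbitrary: k)
  case 0
  then show ?case by (cases k) auto
next
  case (Suc n)
  then show ?case by (cases k) auto
qed

lemma qbin_diag [simp]: "qbin p n n = 1"
  by (induction n) (simp_all add: qbin_eq_0)

lemma qbin_mult_qpoch: "k \<le> n \<Longrightarrow> qbin p n k * qpoch p p k * qpoch p p (n - k) = qpoch p p n"
proof (induction n arbitrary: k)
  case 0
  then show ?case by simp
next
  case (Suc n k)
  show ?case
  proof (cases k)
    case 0
    then show ?thesis by simp
  next
    case (Suc i)
    show ?thesis
    proof (cases "i = n")
      case True
      then show ?thesis using \<open>k = Suc i\<close> by (simp add: qbin_eq_0 qpoch_def)
    next
      case False
      with Suc.prems \<open>k = Suc i\<close> have "i < n" by simp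
      have qpoch_Suc_i: "qpoch p p (Suc i) = qpoch p p i * (1 - p ^ Suc i)"
        and qpoch_n_i: "qpoch p p (n - i) = qpoch p p (n - Suc i) * (1 - p ^ (n - i))"
        using qpoch_same_Suc[of p i] qpoch_same_Suc[of p "n - Suc i"] \<open>i < n\<close>
        by (simp_all add: Suc_diff_Suc)
      have IH1: "qbin p n (Suc i) * qpoch p p (Suc i) * qpoch p p (n - Suc i) = qpoch p p n"
        and IH2: "qbin p n i * qpoch p p i * qpoch p p (n - i) = qpoch p p n"
        using Suc.IH \<open>i < n\<close> by simp_all
      have "n - i + Suc i = Suc n"
        using \<open>i < n\<close> by simp
      then have exp: "p ^ (n - i) * p ^ Suc i = p ^ Suc n"
        by (metis power_add)
      have "qbin p (Suc n) k * qpoch p p k * qpoch p p (Suc n - k)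
          = qbin p n (Suc i) * qpoch p p (Suc i) * qpoch p p (n - i)
            + p ^ (n - i) * qbin p n i * qpoch p p (Suc i) * qpoch p p (n - i)"
        using \<open>k = Suc i\<close> by (simp add: algebra_simps)
      also have "\<dots> = (qbin p n (Suc i) * qpoch p p (Suc i) * qpoch p p (n - Suc i)) * (1 - p ^ (n - i))
            + p ^ (n - i) * (qbin p n i * qpoch p p i * qpoch p p (n - i)) * (1 - p ^ Suc i)"
        unfolding qpoch_n_i qpoch_Suc_i by (simp only: ac_simps)
      also have "\<dots> = qpoch p p n * (1 - p ^ (n - i)) + p ^ (n - i) * qpoch p p n * (1 - p ^ Suc i)"
        unfolding IH1 IH2 ..
      also have "\<dots> = qpoch p p (Suc n)"
        using exp by (simp add: qpoch_same_Suc algebra_simps)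
      finally show ?thesis .
    qed
  qed
qed

lemma coeff_prod_qbin:
  fixes p t :: "'a::comm_ring_1"
  shows "coeff (\<Prod>i<n. [:1, t * p ^ i:]) k = qbin p n k * p ^ (k choose 2) * t ^ k"
proof (induction n arbitrary: k)
  case 0
  then show ?case by (cases k) (auto simp: choose_two)
next
  case (Suc n k)
  have prod_Suc: "(\<Prod>i<Suc n. [:1, t * p ^ i:])
      = (\<Prod>i<n. [:1, t * p ^ i:]) + pCons 0 (smult (t * p ^ n) (\<Prod>i<n. [:1, t * p ^ i:]))"
    by simp
  show ?case
  proof (cases k)
    case 0
    then show ?thesis using Suc.IH[of 0] by (simp add: prod_Suc)
  next
    case (Suc i)
    show ?thesis
    proof (cases "i \<le> n")
      case True
      have "Suc i choose 2 = i + (i choose 2)"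
        by (simp add: numeral_2_eq_2)
      then have "n + (i choose 2) = (n - i) + (Suc i choose 2)"
        using True by simp
      then have exp: "p ^ n * p ^ (i choose 2) = p ^ (n - i) * p ^ (Suc i choose 2)"
        by (metis power_add)
      show ?thesis
        using Suc.IH[of k] Suc.IH[of i] \<open>k = Suc i\<close>
        by (simp add: prod_Suc algebra_simps flip: exp)
    next
      case False
      then show ?thesis
        using Suc.IH[of k] Suc.IH[of i] \<open>k = Suc i\<close> by (simp add: prod_Suc qbin_eq_0)
    qed
  qed
qed

lemma qbinom_eq_qbin:
  fixes p :: "'a::field"
  assumes "\<And>i. 0 < i \<Longrightarrow> p ^ i \<noteq> 1" and "k \<le> n"
  shows "qbinom p (int n) (int k) = qbin p n k"
  using qbin_mult_qpoch[OF \<open>k \<le> n\<close>, of p] qpoch_same_nonzero[OF assms(1)] \<open>k \<le> n\<close>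
  by (simp add: qbinom_def nat_diff_distrib field_simps)

definition cyclo3 :: "'a::field poly" where
  "cyclo3 = [:1, 1, 1:]"

lemma monom_cong_cyclo3:
  "[monom c e = [:c * of_int (leg3 (1 - int e)), c * of_int (leg3 (int e)):]] (mod cyclo3)"
proof -
  have "[:0, 1:] ^ 3 - 1 = cyclo3 * [:-1, 1:]"
    by (simp add: cyclo3_def numeral_3_eq_3 one_pCons)
  then have X3: "[[:0, 1:] ^ 3 = 1] (mod cyclo3)"
    unfolding cong_iff_dvd_diff by (metis dvd_triv_left)
  have "[:0, 1:] ^ 2 - [:-1, -1:] = cyclo3"
    by (simp add: cyclo3_def numeral_2_eq_2 one_pCons)
  then have X2: "[[:0, 1:] ^ 2 = [:-1, -1:]] (mod cyclo3)"
    unfolding cong_iff_dvd_diff by (metis dvd_refl)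
  have "monom c e = [:c:] * ([:0, 1:] ^ 3) ^ (e div 3) * [:0, 1:] ^ (e mod 3)"
    by (simp add: monom_altdef mult.assoc flip: power_mult power_add)
  also have "[\<dots> = [:c:] * 1 ^ (e div 3) * [:0, 1:] ^ (e mod 3)] (mod cyclo3)"
    by (intro cong_mult cong_pow X3 cong_refl)
  finally have reduced: "[monom c e = [:c:] * [:0, 1:] ^ (e mod 3)] (mod cyclo3)"
    by simp
  have "e mod 3 = 0 \<or> e mod 3 = 1 \<or> e mod 3 = 2"
    by arith
  then show ?thesis
  proof (elim disjE)
    assume "e mod 3 = 0"
    moreover from this have "leg3 (1 - int e) = 1" "leg3 (int e) = 0"
      unfolding leg3_def by presburger+
    ultimately show ?thesis
      using reduced by simp
  next
    assume "e mod 3 = 1"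
    moreover from this have "leg3 (1 - int e) = 0" "leg3 (int e) = 1"
      unfolding leg3_def by presburger+
    ultimately show ?thesis
      using reduced by simp
  next
    assume "e mod 3 = 2"
    moreover from this have "leg3 (1 - int e) = -1" "leg3 (int e) = -1"
      unfolding leg3_def by presburger+
    moreover have "[[:c:] * [:0, 1:] ^ 2 = [:c:] * [:-1, -1:]] (mod cyclo3)"
      by (intro cong_mult cong_refl X2)
    ultimately show ?thesis
      using reduced by (auto elim: cong_trans)
  qed
qed

lemma linear_cong_cyclo3_iff:
  "[[:a, b:] = [:c, d:]] (mod cyclo3) \<longleftrightarrow> a = c \<and> b = d"
proof
  assume "[[:a, b:] = [:c, d:]] (mod cyclo3)"
  then have dvd: "cyclo3 dvd [:a - c, b - d:]"
    by (simp add: cong_iff_dvd_diff)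
  have "[:a - c, b - d:] = 0"
  proof (rule ccontr)
    assume "[:a - c, b - d:] \<noteq> 0"
    from dvd_imp_degree_le[OF dvd this] show False
      by (simp add: cyclo3_def split: if_splits)
  qed
  then show "a = c \<and> b = d"
    by simp
qed simp

lemma leg3_succ_eq_diff: "leg3 (e + 1) = leg3 (1 - e) - leg3 e"
  unfolding leg3_def by presburger

lemma sum_monom_leg3_eq:
  assumes "[(\<Sum>k\<in>A. monom (c k) (e k)) = [:a, b:]] (mod cyclo3)"
  shows "(\<Sum>k\<in>A. c k * of_int (leg3 (int (e k) + 1))) = a - b"
proof -
  have "[(\<Sum>k\<in>A. monom (c k) (e k))
      = (\<Sum>k\<in>A. [:c k * of_int (leg3 (1 - int (e k))), c k * of_int (leg3 (int (e k))):])] (mod cyclo3)"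
    by (intro cong_sum monom_cong_cyclo3)
  also have "(\<Sum>k\<in>A. [:c k * of_int (leg3 (1 - int (e k))), c k * of_int (leg3 (int (e k))):])
      = [:\<Sum>k\<in>A. c k * of_int (leg3 (1 - int (e k))), \<Sum>k\<in>A. c k * of_int (leg3 (int (e k))):]"
    by (induction A rule: infinite_finite_induct) simp_all
  finally have "[[:\<Sum>k\<in>A. c k * of_int (leg3 (1 - int (e k))), \<Sum>k\<in>A. c k * of_int (leg3 (int (e k))):]
      = [:a, b:]] (mod cyclo3)"
    using assms by (blast intro: cong_sym cong_trans)
  then show ?thesis
    unfolding linear_cong_cyclo3_iff leg3_succ_eq_diff
    by (auto simp: sum_subtractf right_diff_distrib)
qed

lemma reciprocal_pair_cong_cyclo3:
  assumes "x * y = 1"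
  shows "[[:1, -x:] * [:1, -y:] = [:0, -(1 + x + y):]] (mod cyclo3)"
proof -
  have "[:1, -x:] * [:1, -y:] - [:0, -(1 + x + y):] = cyclo3"
    using assms by (simp add: cyclo3_def algebra_simps)
  then show ?thesis
    unfolding cong_iff_dvd_diff by (metis dvd_refl)
qed

lemma prod_pCons_0_eq_monom: "(\<Prod>s\<in>A. [:0, c s:]) = monom (\<Prod>s\<in>A. c s) (card A)"
  by (induction A rule: infinite_finite_induct) (simp_all add: monom_Suc smult_monom)

lemma prod_lessThan_odd_pairs:
  fixes G :: "nat \<Rightarrow> 'a::comm_monoid_mult"
  shows "(\<Prod>i<2*L+1. G i) = G (2*L) * (\<Prod>s<L. G (L + s) * G (L - Suc s))"
proof -
  have "(\<Prod>i<2*L. G i) = (\<Prod>i<L. G i) * (\<Prod>i\<in>{L..<L+L}. G i)"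
    using prod.atLeastLessThan_concat[of 0 L "L + L" G] by (simp add: atLeast0LessThan mult_2)
  also have "\<dots> = (\<Prod>s<L. G (L - Suc s)) * (\<Prod>s<L. G (L + s))"
    using prod.shift_bounds_nat_ivl[of G 0 L L] prod.nat_diff_reindex[of G L]
    by (simp add: atLeast0LessThan add.commute)
  finally show ?thesis
    by (simp add: prod.distrib mult.commute)
qed

lemma monom_mult_eq_sum_monom:
  fixes p :: "'a::comm_semiring_1 poly"
  assumes "degree p \<le> n"
  shows "monom 1 m * p = (\<Sum>k\<le>n. monom (coeff p k) (k + m))"
proof -
  have "monom 1 m * p = monom 1 m * (\<Sum>k\<le>n. monom (coeff p k) k)"
    using poly_as_sum_of_monoms'[OF assms] by simp
  then show ?thesis
    by (simp add: sum_distrib_left mult_monom add.commute)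
qed

(* The factor for i is 1 - q^(2(i-L)+1) X, written so that the q-binomial theorem applies. *)
definition pairing_poly :: "'a::field \<Rightarrow> nat \<Rightarrow> 'a poly" where
  "pairing_poly q L = (\<Prod>i<2*L+1. [:1, - q / q ^ (2*L) * (q^2) ^ i:])"

lemma coeff_pairing_poly:
  "coeff (pairing_poly q L) k = qbin (q^2) (2*L+1) k * (q^2) ^ (k choose 2) * (- q / q ^ (2*L)) ^ k"
  unfolding pairing_poly_def by (rule coeff_prod_qbin)

lemma degree_pairing_poly: "degree (pairing_poly q L) \<le> 2*L+1"
  by (rule degree_le) (simp add: coeff_pairing_poly qbin_eq_0)

lemma summand_eq_coeff_pairing_poly:
  fixes q :: "'a::field"
  assumes "q \<noteq> 0" and "\<forall>k::nat. k > 0 \<longrightarrow> q ^ k \<noteq> 1" and "k \<le> 2*L+1"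
  defines "j \<equiv> int k - int L"
  shows "(-1) ^ nat \<bar>j\<bar> * q ^ nat (j^2) * of_int (leg3 (j + 1)) * qbinom (q^2) (2 * int L + 1) (int L + j)
    = (-1) ^ L * q ^ (L*L) * (coeff (pairing_poly q L) k * of_int (leg3 (int (k + 2*L) + 1)))"
proof -
  have "k + L = nat \<bar>j\<bar> + 2 * min k L"
    unfolding j_def by linarith
  then have "(-1::'a) ^ (k + L) = (-1) ^ nat \<bar>j\<bar>"
    by (simp add: power_add power_mult)
  then have sign: "(-1::'a) ^ nat \<bar>j\<bar> = (-1) ^ L * (-1) ^ k"
    by (metis power_add mult.commute)
  have "2 * (k choose 2) + k = k * k"
    by (induction k) (simp_all add: numeral_2_eq_2)
  moreover have "int (nat (j^2) + 2*L*k) = j^2 + 2 * int L * int k"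
    by simp
  then have "int (nat (j^2) + 2*L*k) = int (L*L + k*k)"
    unfolding j_def by (simp add: power2_eq_square algebra_simps)
  ultimately have "nat (j^2) + 2*L*k = L*L + (2 * (k choose 2) + k)"
    by (simp only: of_nat_eq_iff)
  then have "q ^ nat (j^2) * (q ^ (2*L)) ^ k = q ^ (L*L) * ((q^2) ^ (k choose 2) * q ^ k)"
    by (metis power_add power_mult)
  then have square: "q ^ nat (j^2) = q ^ (L*L) * ((q^2) ^ (k choose 2) * q ^ k) / (q ^ (2*L)) ^ k"
    using \<open>q \<noteq> 0\<close> by (simp add: eq_divide_eq)
  have "leg3 (j + 1) = leg3 (int (k + 2*L) + 1)"
    unfolding j_def leg3_def by presburger
  moreover have "qbinom (q^2) (2 * int L + 1) (int L + j) = qbin (q^2) (2*L+1) k"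
    using qbinom_eq_qbin[of "q^2" k "2*L+1"] assms(2,3) by (simp add: j_def ac_simps flip: power_mult)
  moreover have "(- q / q ^ (2*L)) ^ k = (-1) ^ k * q ^ k / (q ^ (2*L)) ^ k"
    by (simp add: power_divide power_minus')
  ultimately show ?thesis
    unfolding sign square coeff_pairing_poly
    by (simp only: times_divide_eq_left times_divide_eq_right mult_ac)
qed

lemma sum_eq_coeff_pairing_poly:
  fixes q :: "'a::field"
  assumes "q \<noteq> 0" and "\<forall>k::nat. k > 0 \<longrightarrow> q ^ k \<noteq> 1"
  shows "(\<Sum>j\<in>{- int L .. int L + 1}.
            (-1) ^ nat \<bar>j\<bar> * q ^ nat (j^2) * of_int (leg3 (j + 1))
            * qbinom (q^2) (2 * int L + 1) (int L + j))
    = (-1) ^ L * q ^ (L*L) * (\<Sum>k\<le>2*L+1. coeff (pairing_poly q L) k * of_int (leg3 (int (k + 2*L) + 1)))"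
  unfolding sum_distrib_left
proof (rule sym, rule sum.reindex_bij_witness[of _ "\<lambda>j. nat (j + int L)" "\<lambda>k. int k - int L"])
  fix k
  assume "k \<in> {..2*L+1}"
  then show "(-1) ^ nat \<bar>int k - int L\<bar> * q ^ nat ((int k - int L)^2) * of_int (leg3 (int k - int L + 1))
        * qbinom (q^2) (2 * int L + 1) (int L + (int k - int L))
      = (-1) ^ L * q ^ (L*L) * (coeff (pairing_poly q L) k * of_int (leg3 (int (k + 2*L) + 1)))"
    using summand_eq_coeff_pairing_poly[OF assms] by simp
qed auto

lemma pairing_poly_eq_prod_pairs:
  fixes q :: "'a::field"
  assumes "q \<noteq> 0"
  shows "pairing_poly q L = [:1, - (q ^ (2*L+1)):]
    * (\<Prod>s<L. [:1, - (q ^ (2*s+1)):] * [:1, - (1 / q ^ (2*s+1)):])"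
proof -
  define G where "G i = [:1, - q / q ^ (2*L) * (q^2) ^ i:]" for i :: nat
  have upper: "G (L + s) = [:1, - (q ^ (2*s+1)):]" for s
    using assms by (simp add: G_def power_add field_simps flip: power_mult)
  have lower: "G (L - Suc s) = [:1, - (1 / q ^ (2*s+1)):]" if "s < L" for s
  proof -
    have "2*L = 2*(L - Suc s) + (2*s+1) + 1"
      using that by simp
    then have "q ^ (2*L) = q ^ (2*(L - Suc s)) * q ^ (2*s+1) * q"
      by (metis power_add power_one_right)
    then show ?thesis
      using assms by (simp add: G_def field_simps flip: power_mult)
  qed
  have last: "G (2*L) = [:1, - (q ^ (2*L+1)):]"
    using assms by (simp add: G_def field_simps flip: power_mult power_add)
  have "pairing_poly q L = (\<Prod>i<2*L+1. G i)"
    by (simp add: pairing_poly_def G_def)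
  also have "\<dots> = G (2*L) * (\<Prod>s<L. G (L + s) * G (L - Suc s))"
    by (rule prod_lessThan_odd_pairs)
  also have "\<dots> = [:1, - (q ^ (2*L+1)):] * (\<Prod>s<L. [:1, - (q ^ (2*s+1)):] * [:1, - (1 / q ^ (2*s+1)):])"
    unfolding last upper by (intro arg_cong2[where f = times] refl prod.cong) (simp_all add: lower)
  finally show ?thesis .
qed

lemma pairing_poly_cong_cyclo3:
  fixes q :: "'a::field" and L :: nat
  assumes "q \<noteq> 0"
  defines "V \<equiv> (\<Prod>s<L. - (1 + q ^ (2*s+1) + 1 / q ^ (2*s+1)))"
  shows "[monom 1 (2*L) * pairing_poly q L = [:V, - (q ^ (2*L+1) * V):]] (mod cyclo3)"
proof -
  have "[pairing_poly q L
      = [:1, - (q ^ (2*L+1)):] * (\<Prod>s<L. [:0, - (1 + q ^ (2*s+1) + 1 / q ^ (2*s+1)):])] (mod cyclo3)"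
    unfolding pairing_poly_eq_prod_pairs[OF assms(1)]
    using assms(1) by (intro cong_mult cong_refl cong_prod reciprocal_pair_cong_cyclo3) simp
  also have "[:1, - (q ^ (2*L+1)):] * (\<Prod>s<L. [:0, - (1 + q ^ (2*s+1) + 1 / q ^ (2*s+1)):])
      = [:1, - (q ^ (2*L+1)):] * monom V L"
    by (simp add: prod_pCons_0_eq_monom V_def)
  finally have "[monom 1 (2*L) * pairing_poly q L
      = monom 1 (2*L) * ([:1, - (q ^ (2*L+1)):] * monom V L)] (mod cyclo3)"
    by (rule cong_mult[OF cong_refl])
  also have "monom 1 (2*L) * ([:1, - (q ^ (2*L+1)):] * monom V L) = [:1, - (q ^ (2*L+1)):] * monom V (3*L)"
  proof -
    have "monom 1 (2*L) * monom V L = monom V (3*L)"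
      by (simp add: mult_monom)
    then show ?thesis
      by (metis mult.left_commute)
  qed
  also have "[[:1, - (q ^ (2*L+1)):] * monom V (3*L) = [:1, - (q ^ (2*L+1)):] * [:V:]] (mod cyclo3)"
  proof -
    have "leg3 (1 - int (3*L)) = 1" "leg3 (int (3*L)) = 0"
      unfolding leg3_def by presburger+
    then show ?thesis
      using monom_cong_cyclo3[of V "3*L"] by (intro cong_mult cong_refl) simp
  qed
  finally show ?thesis
    by (simp add: mult.commute)
qed

lemma prod_odd_powers: "(\<Prod>s<L. q ^ (2*s+1)) = q ^ (L*L)"
  by (induction L) (simp_all add: power_add mult_2_right mult_ac)

lemma sign_square_prod_reciprocal:
  fixes q :: "'a::field"
  assumes "q \<noteq> 0"
  shows "(-1) ^ L * q ^ (L*L) * (\<Prod>s<L. - (1 + q ^ (2*s+1) + 1 / q ^ (2*s+1)))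
    = (\<Prod>s<L. 1 + q ^ (2*s+1) + (q ^ (2*s+1))^2)"
proof -
  have "(-1) ^ L * q ^ (L*L) * (\<Prod>s<L. - (1 + q ^ (2*s+1) + 1 / q ^ (2*s+1)))
      = (\<Prod>s<L. (-1) * q ^ (2*s+1) * - (1 + q ^ (2*s+1) + 1 / q ^ (2*s+1)))"
    by (simp only: prod.distrib prod_odd_powers) simp
  also have "\<dots> = (\<Prod>s<L. 1 + q ^ (2*s+1) + (q ^ (2*s+1))^2)"
    using assms by (intro prod.cong) (simp_all add: field_simps power2_eq_square)
  finally show ?thesis .
qed

lemma qpoch_odd_quotient:
  fixes q :: "'a::field"
  assumes "\<forall>k::nat. k > 0 \<longrightarrow> q ^ k \<noteq> 1"
  shows "qpoch (q^3) (q^6) L / qpoch q (q^2) (L + 1) * (1 - q ^ (2 * (1 + 2 * L)))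
    = (\<Prod>s<L. 1 + q ^ (2*s+1) + (q ^ (2*s+1))^2) * (1 + q ^ (2*L+1))"
proof -
  define x where "x s = q ^ (2*s+1)" for s
  have x_ne_1: "x s \<noteq> 1" for s
    using assms[rule_format, of "2*s+1"] by (simp add: x_def)
  have cube: "q^3 * (q^6) ^ s = x s ^ 3" for s
  proof -
    have "3 + 6*s = (2*s+1)*3"
      by simp
    then show ?thesis
      unfolding x_def by (metis power_add power_mult)
  qed
  have odd: "q * (q^2) ^ s = x s" for s
    by (simp add: x_def flip: power_mult)
  have num: "qpoch (q^3) (q^6) L = (\<Prod>s<L. 1 - x s) * (\<Prod>s<L. 1 + x s + (x s)^2)"
    unfolding qpoch_def cube prod.distrib [symmetric]
    by (simp add: algebra_simps power2_eq_square power3_eq_cube)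
  have den: "qpoch q (q^2) (L + 1) = (\<Prod>s<L. 1 - x s) * (1 - x L)"
    unfolding qpoch_def odd by simp
  have "1 - q ^ (2 * (1 + 2 * L)) = (1 - x L) * (1 + x L)"
    unfolding x_def by (simp add: algebra_simps flip: power_mult power_add)
  moreover have "(\<Prod>s<L. 1 - x s) \<noteq> 0" "1 - x L \<noteq> 0"
    using x_ne_1 by auto
  ultimately show ?thesis
    unfolding num den by (simp add: x_def)
qed

theorem theorem2p3:
  fixes q :: "'a::field" and L :: nat
  assumes "\<forall>k::nat. k > 0 \<longrightarrow> q ^ k \<noteq> 1"
  shows "(\<Sum>j\<in>{- int L .. int L + 1}.
            (-1) ^ nat \<bar>j\<bar> * q ^ nat (j^2) * of_int (leg3 (j + 1))
            * qbinom (q^2) (2 * int L + 1) (int L + j))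
         = qpoch (q^3) (q^6) L / qpoch q (q^2) (L + 1) * (1 - q ^ (2 * (1 + 2 * L)))"
proof (cases "q = 0")
  case True
  have "(-1) ^ nat \<bar>j\<bar> * q ^ nat (j^2) * of_int (leg3 (j + 1)) * qbinom (q^2) (2 * int L + 1) (int L + j)
      = (if j = 0 then 1 else 0)" for j :: int
    using True by (simp add: leg3_def qbinom_def)
  then show ?thesis
    using True by simp
next
  case False
  define V where "V = (\<Prod>s<L. - (1 + q ^ (2*s+1) + 1 / q ^ (2*s+1)))"
  have expand: "monom 1 (2*L) * pairing_poly q L = (\<Sum>k\<le>2*L+1. monom (coeff (pairing_poly q L) k) (k + 2*L))"
    using degree_pairing_poly by (rule monom_mult_eq_sum_monom)
  have "[(\<Sum>k\<le>2*L+1. monom (coeff (pairing_poly q L) k) (k + 2*L)) = [:V, - (q ^ (2*L+1) * V):]] (mod cyclo3)"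
    using pairing_poly_cong_cyclo3[OF False, of L] unfolding expand V_def .
  from sum_monom_leg3_eq[OF this]
  have "(\<Sum>k\<le>2*L+1. coeff (pairing_poly q L) k * of_int (leg3 (int (k + 2*L) + 1))) = V * (1 + q ^ (2*L+1))"
    by (simp add: algebra_simps)
  then show ?thesis
    unfolding sum_eq_coeff_pairing_poly[OF False assms] qpoch_odd_quotient[OF assms]
    using sign_square_prod_reciprocal[OF False, of L] by (simp add: V_def mult.assoc[symmetric])
qed

end
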